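(* Let $1<n\leq m$ and let $v\in Z_{n,m}$ with $h(v)\geq h_{n,m}$ and $\sum_{i\in I_c(v)}v_i=n$. Then $d(v,0)\leq D_{n,m}$.
   Context: Elements of $\mathbb{Z}_n$ are identified with representatives in $\{0,\dots,n-1\}$ (so $v_0,v_{m+1}$ are such integers in sums). $Z_{n,m}$ has vertices $u=(u_0,\dots,u_{m+1})\in\mathbb{Z}_n\times\{-1,0,1\}^m\times\mathbb{Z}_n$ with $\sum u_i\equiv0\pmod n$; $u,v$ adjacent if there is $0\leq i\leq m$ with $u_j=v_j$ for $j\notin\{i,i+1\}$ and either ($u_i=v_i+1$, $u_{i+1}=v_{i+1}-1$) or ($u_i=v_i-1$, $u_{i+1}=v_{i+1}+1$), arithmetic in coordinates $0,m+1$ in $\mathbb{Z}_n$. $d$ is graph distance, $0$ the all-zero vertex. $\operatorname{Piv}(v)$ is the set of $-1\le p\le m+1$ with $n\mid\sum_{i=0}^pv_i$. $p_l(v)=\max\{p\in\operatorname{Piv}(v):p<\frac m2\}$, $p_r(v)=\min\{p\in\operatorname{Piv}(v):p\ge\frac m2\}$, $I_c(v)=\{p_l(v)+1,\dots,p_r(v)\}$, $h(v)=\min\{|p-\frac m2|:p\in\operatorname{Piv}(v)\}$, $h_{n,m}=\frac n2$ if $2\mid(m-n)$ and $\frac{n+1}2$ otherwise. $u^{(0)}$: $u_i=1$ ($1\le i\le m$), $u_0\equiv-\lfloor\frac{m-n}2\rfloor\pmod n$; for $n<m$, $m-n$ odd, $u^{(1)}$: $u_{\lceil(m+1)/2\rceil}=0$,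 other $u_i=1$ ($1\le i\le m$), $u_0\equiv-\lfloor\frac{m-n}2\rfloor\pmod n$. $D_{n,m}=d(u^{(0)},0)$ if $2\mid(m-n)$, else $\max\{d(u^{(0)},0),d(u^{(1)},0)\}$. *)

theory Defs
  imports Complex_Main "HOL-Library.Extended_Nat"
begin

(* Vertices of Z_{n,m}: functions u :: int => int, coordinates 0..m+1; u 0 and u (m+1)
   are the representatives in {0..n-1}; u i = 0 outside 0..m+1 (canonical encoding). *)
definition inZ :: "int \<Rightarrow> int \<Rightarrow> (int \<Rightarrow> int) \<Rightarrow> bool" where
  "inZ n m u \<longleftrightarrow>
     (\<forall>i. (i < 0 \<or> i > m + 1) \<longrightarrow> u i = 0) \<and>
     u 0 \<in> {0..<n} \<and> u (m + 1) \<in> {0..<n} \<and>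
     (\<forall>i\<in>{1..m}. u i \<in> {-1, 0, 1}) \<and>
     n dvd (\<Sum>i=0..m+1. u i)"

definition coordeq :: "int \<Rightarrow> int \<Rightarrow> int \<Rightarrow> int \<Rightarrow> int \<Rightarrow> bool" where
  "coordeq n m k a b \<longleftrightarrow> (if k = 0 \<or> k = m + 1 then a mod n = b mod n else a = b)"

definition adjZ :: "int \<Rightarrow> int \<Rightarrow> (int \<Rightarrow> int) \<Rightarrow> (int \<Rightarrow> int) \<Rightarrow> bool" where
  "adjZ n m u v \<longleftrightarrow> inZ n m u \<and> inZ n m v \<and>
     (\<exists>i\<in>{0..m}. (\<forall>j\<in>{0..m+1}. j \<noteq> i \<and> j \<noteq> i + 1 \<longrightarrow> u j = v j) \<and>
        ((coordeq n m i (u i) (v i + 1) \<and> coordeq n m (i + 1) (u (i + 1)) (v (i + 1) - 1)) \<or>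
         (coordeq n m i (u i) (v i - 1) \<and> coordeq n m (i + 1) (u (i + 1)) (v (i + 1) + 1))))"

definition distZ :: "int \<Rightarrow> int \<Rightarrow> (int \<Rightarrow> int) \<Rightarrow> (int \<Rightarrow> int) \<Rightarrow> enat" where
  "distZ n m u v = (if \<exists>k. (adjZ n m ^^ k) u v
                     then enat (LEAST k. (adjZ n m ^^ k) u v) else \<infinity>)"

definition zeroV :: "int \<Rightarrow> int" where
  "zeroV = (\<lambda>_. 0)"

definition Piv :: "int \<Rightarrow> int \<Rightarrow> (int \<Rightarrow> int) \<Rightarrow> int set" where
  "Piv n m v = {p. -1 \<le> p \<and> p \<le> m + 1 \<and> n dvd (\<Sum>i=0..p. v i)}"

definition p_l :: "int \<Rightarrow> int \<Rightarrow> (int \<Rightarrow> int) \<Rightarrow> int" where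
  "p_l n m v = Max {p \<in> Piv n m v. real_of_int p < real_of_int m / 2}"

definition p_r :: "int \<Rightarrow> int \<Rightarrow> (int \<Rightarrow> int) \<Rightarrow> int" where
  "p_r n m v = Min {p \<in> Piv n m v. real_of_int p \<ge> real_of_int m / 2}"

definition I_c :: "int \<Rightarrow> int \<Rightarrow> (int \<Rightarrow> int) \<Rightarrow> int set" where
  "I_c n m v = {p_l n m v + 1 .. p_r n m v}"

definition hZ :: "int \<Rightarrow> int \<Rightarrow> (int \<Rightarrow> int) \<Rightarrow> real" where
  "hZ n m v = Min ((\<lambda>p. \<bar>real_of_int p - real_of_int m / 2\<bar>) ` Piv n m v)"

definition h_nm :: "int \<Rightarrow> int \<Rightarrow> real" where
  "h_nm n m = (if even (m - n) then real_of_int n / 2 else (real_of_int n + 1) / 2)"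

(* u^(0): u_i = 1 (1<=i<=m), u_0 = -floor((m-n)/2) mod n, u_{m+1} forced by membership *)
definition u0Z :: "int \<Rightarrow> int \<Rightarrow> (int \<Rightarrow> int)" where
  "u0Z n m = (let c = (- ((m - n) div 2)) mod n in
     (\<lambda>i. if 1 \<le> i \<and> i \<le> m then 1 else if i = 0 then c
          else if i = m + 1 then (- (c + m)) mod n else 0))"

definition u1Z :: "int \<Rightarrow> int \<Rightarrow> (int \<Rightarrow> int)" where
  "u1Z n m = (let c = (- ((m - n) div 2)) mod n in
     (\<lambda>i. if i = \<lceil>real_of_int (m + 1) / 2\<rceil> then 0
          else if 1 \<le> i \<and> i \<le> m then 1 else if i = 0 then c
          else if i = m + 1 then (- (c + m - 1)) mod n else 0))"

definition D_nm :: "int \<Rightarrow> int \<Rightarrow> enat" where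
  "D_nm n m = (if even (m - n) then distZ n m (u0Z n m) zeroV
               else max (distZ n m (u0Z n m) zeroV) (distZ n m (u1Z n m) zeroV))"

end

(* A vertex v is determined by its prefix sums S_0, ..., S_m (the last coordinate is then forced
   modulo n), and an edge at position i changes S_i by 1 and possibly shifts all prefix sums by a
   multiple of n. Hence d(v, 0) is the minimum over multiples c of n of sum_j |S_j - c|: each edge
   changes this quantity by at most one, and a move at an extremal prefix sum always lowers it.
   Under the hypotheses on v the two pivots enclosing the middle are at distance at least n/2 from
   m/2 and the prefix sums between them stay strictly between two consecutive multiples a, a + n;
   elsewhere they are 1-Lipschitz. Averaging the costs at c = a and c = a + n gives
   2 d(v, 0) <= (m + 1) n + 2 e (e + 1) with e = (m - n) div 2. The prefix sums of u^(0) and u^(1)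
   are (almost) arithmetic progressions, and bounding |x| below by a suitable linear function shows
   that this bound, up to one, is attained at every c. *)
theory Submission
  imports Defs
begin

definition psum :: "(int \<Rightarrow> int) \<Rightarrow> int \<Rightarrow> int" where
  "psum v p = (\<Sum>i=0..p. v i)"

definition cost :: "int \<Rightarrow> (int \<Rightarrow> int) \<Rightarrow> int \<Rightarrow> int" where
  "cost m v c = (\<Sum>j=0..m. \<bar>psum v j - c\<bar>)"

lemma psum_neg: "p < 0 \<Longrightarrow> psum v p = 0"
  by (simp add: psum_def)

lemma psum_0: "psum v 0 = v 0"
  by (simp add: psum_def)

lemma psum_step: "0 \<le> p \<Longrightarrow> psum v p = psum v (p - 1) + v p"
proof -
  assume "0 \<le> p"
  then have "{0..p} = insert p {0..p - 1}" by auto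
  then show ?thesis by (simp add: psum_def add.commute)
qed

lemma psum_split: "-1 \<le> a \<Longrightarrow> a \<le> b \<Longrightarrow> psum v b = psum v a + (\<Sum>i=a+1..b. v i)"
proof -
  assume "-1 \<le> a" "a \<le> b"
  then have "{0..b} = {0..a} \<union> {a+1..b}" "{0..a} \<inter> {a+1..b} = {}" by auto
  then show ?thesis unfolding psum_def by (simp add: sum.union_disjoint)
qed

lemma psum_lipschitz:
  assumes Z: "inZ n m v" and "0 \<le> a" "a \<le> b" "b \<le> m"
  shows "\<bar>psum v b - psum v a\<bar> \<le> b - a"
proof -
  obtain k :: nat where k: "b = a + int k" using assms(3) zle_iff_zadd by auto
  have vr: "\<forall>i\<in>{1..m}. v i \<in> {-1, 0, 1}" using Z unfolding inZ_def by auto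
  have "a + int k \<le> m \<Longrightarrow> \<bar>psum v (a + int k) - psum v a\<bar> \<le> int k"
  proof (induction k)
    case (Suc k)
    have "psum v (a + int (Suc k)) = psum v (a + int k) + v (a + int (Suc k))"
      using psum_step[of "a + int (Suc k)" v] assms(2) by simp
    moreover have "v (a + int (Suc k)) \<in> {-1, 0, 1}" using vr Suc.prems assms(2) by auto
    ultimately show ?case using Suc by auto
  qed simp
  then show ?thesis using k assms by simp
qed

lemma cost_nonneg: "0 \<le> cost m v c"
  unfolding cost_def by (intro sum_nonneg) auto

lemma double_gauss_sum_int:
  fixes a b :: int
  assumes "a \<le> b + 1"
  shows "2 * (\<Sum>j=a..b. j) = (b - a + 1) * (a + b)"
proof -
  obtain k :: nat where k: "b = a - 1 + int k" using zle_iff_zadd[of "a - 1" b] assms by auto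
  have "2 * (\<Sum>j=a..a - 1 + int k. j) = int k * (2 * a + int k - 1)"
  proof (induction k)
    case (Suc k)
    have "{a..a - 1 + int (Suc k)} = insert (a + int k) {a..a - 1 + int k}" by auto
    then show ?case using Suc by (simp add: algebra_simps)
  qed simp
  then show ?thesis unfolding k by (simp add: algebra_simps)
qed

lemma sum_abs_add_delta_le:
  fixes f :: "int \<Rightarrow> int"
  assumes "i \<in> {0..m}" "\<bar>s\<bar> \<le> 1"
  shows "(\<Sum>p=0..m. \<bar>f p + (if p = i then s else 0)\<bar>) \<le> (\<Sum>p=0..m. \<bar>f p\<bar>) + 1"
proof -
  have "(\<Sum>p=0..m. \<bar>f p + (if p = i then s else 0)\<bar>) \<le> (\<Sum>p=0..m. \<bar>f p\<bar> + (if p = i then 1 else 0))"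
    using assms(2) by (intro sum_mono) auto
  also have "\<dots> = (\<Sum>p=0..m. \<bar>f p\<bar>) + 1"
    using assms(1) by (simp add: sum.distrib sum.delta)
  finally show ?thesis .
qed

lemma sum_abs_add_delta_eq:
  fixes f :: "int \<Rightarrow> int"
  assumes "i \<in> {0..m}" "s * f i < 0" "\<bar>s\<bar> = 1"
  shows "(\<Sum>p=0..m. \<bar>f p + (if p = i then s else 0)\<bar>) = (\<Sum>p=0..m. \<bar>f p\<bar>) - 1"
proof -
  have "s = 1 \<or> s = -1" using assms(3) by auto
  then have "\<bar>f i + s\<bar> = \<bar>f i\<bar> - 1" using assms(2) by (auto simp: mult_less_0_iff)
  then have "(\<Sum>p=0..m. \<bar>f p + (if p = i then s else 0)\<bar>) = (\<Sum>p=0..m. \<bar>f p\<bar> + (if p = i then -1 else 0))"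
    by (intro sum.cong) auto
  also have "\<dots> = (\<Sum>p=0..m. \<bar>f p\<bar>) - 1"
    using assms(1) by (simp add: sum.distrib sum.delta)
  finally show ?thesis .
qed

subsection \<open>Lower bound for the distance\<close>

lemma psum_shift:
  assumes "0 \<le> i" "i \<le> m" "0 \<le> p" "p \<le> m"
    and u: "\<forall>j\<in>{0..m}. u j = y j + (if j = i then s + t else if j = i + 1 then - s else 0)"
    and t: "i \<noteq> 0 \<longrightarrow> t = 0"
  shows "psum u p = psum y p + t + (if p = i then s else 0)"
proof -
  have "psum u p = (\<Sum>j=0..p. y j + ((if j = i then s + t else 0) + (if j = i + 1 then - s else 0)))"
    unfolding psum_def using u assms(3,4) by (intro sum.cong) auto
  also have "\<dots> = psum y p + ((if i \<in> {0..p} then s + t else 0) + (if i + 1 \<in> {0..p} then - s else 0))"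
    unfolding psum_def sum.distrib by (simp add: sum.delta)
  also have "\<dots> = psum y p + t + (if p = i then s else 0)"
    using assms by auto
  finally show ?thesis .
qed

lemma adjZ_cost_le:
  assumes "adjZ n m u y"
  obtains t where "n dvd t" "\<And>c. cost m u (c + t) \<le> cost m y c + 1"
proof -
  from assms obtain i where i: "i \<in> {0..m}"
    and same: "\<forall>j\<in>{0..m+1}. j \<noteq> i \<and> j \<noteq> i + 1 \<longrightarrow> u j = y j"
    and cs: "(coordeq n m i (u i) (y i + 1) \<and> coordeq n m (i + 1) (u (i + 1)) (y (i + 1) - 1)) \<or>
         (coordeq n m i (u i) (y i - 1) \<and> coordeq n m (i + 1) (u (i + 1)) (y (i + 1) + 1))"
    unfolding adjZ_def by blast
  obtain s where s: "\<bar>s\<bar> = 1" and c1: "coordeq n m i (u i) (y i + s)"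
    and c2: "coordeq n m (i + 1) (u (i + 1)) (y (i + 1) - s)"
  proof -
    from cs show thesis
    proof
      assume "coordeq n m i (u i) (y i + 1) \<and> coordeq n m (i + 1) (u (i + 1)) (y (i + 1) - 1)"
      then show thesis by (intro that[of 1]) auto
    next
      assume "coordeq n m i (u i) (y i - 1) \<and> coordeq n m (i + 1) (u (i + 1)) (y (i + 1) + 1)"
      then show thesis by (intro that[of "-1"]) auto
    qed
  qed
  define t where "t = u i - y i - s"
  have t0: "i \<noteq> 0 \<longrightarrow> t = 0" using c1 i unfolding coordeq_def t_def by auto
  have "n dvd t"
    using c1 t0 unfolding coordeq_def t_def by (cases "i = 0") (auto simp: mod_eq_dvd_iff diff_diff_eq)
  moreover have "cost m u (c + t) \<le> cost m y c + 1" for c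
  proof -
    have u: "\<forall>j\<in>{0..m}. u j = y j + (if j = i then s + t else if j = i + 1 then - s else 0)"
      using same c2 i unfolding coordeq_def t_def by auto
    have "cost m u (c + t) = (\<Sum>p=0..m. \<bar>(psum y p - c) + (if p = i then s else 0)\<bar>)"
      unfolding cost_def using psum_shift[OF _ _ _ _ u t0] i by (intro sum.cong) auto
    also have "\<dots> \<le> cost m y c + 1"
      unfolding cost_def using sum_abs_add_delta_le[OF i, of s "\<lambda>p. psum y p - c"] s by auto
    finally show ?thesis .
  qed
  ultimately show thesis by (rule that)
qed

lemma relpowp_adjZ_cost_le:
  "(adjZ n m ^^ k) u zeroV \<Longrightarrow> \<exists>c. n dvd c \<and> cost m u c \<le> int k"
proof (induction k arbitrary: u)
  case 0
  then show ?case by (auto simp: cost_def psum_def zeroV_def)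
next
  case (Suc k)
  then obtain y where adj: "adjZ n m u y" and "(adjZ n m ^^ k) y zeroV"
    using relpowp_Suc_D2 by metis
  then obtain c where c: "n dvd c" "cost m y c \<le> int k" using Suc.IH by blast
  obtain t where t: "n dvd t" "\<And>c. cost m u (c + t) \<le> cost m y c + 1"
    using adjZ_cost_le[OF adj] by blast
  have "cost m u (c + t) \<le> int (Suc k)" using t(2)[of c] c(2) by simp
  then show ?case using c(1) t(1) by (intro exI[of _ "c + t"]) simp
qed

lemma distZ_ge:
  assumes "\<And>c. n dvd c \<Longrightarrow> int K \<le> cost m u c"
  shows "enat K \<le> distZ n m u zeroV"
proof (cases "\<exists>k. (adjZ n m ^^ k) u zeroV")
  case True
  define L where "L = (LEAST k. (adjZ n m ^^ k) u zeroV)"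
  have "(adjZ n m ^^ L) u zeroV" unfolding L_def using True by (rule LeastI_ex)
  then obtain c where "n dvd c" "cost m u c \<le> int L" by (blast dest: relpowp_adjZ_cost_le)
  then have "K \<le> L" using assms[of c] by linarith
  then show ?thesis unfolding distZ_def L_def using True by simp
next
  case False
  then show ?thesis unfolding distZ_def by simp
qed

subsection \<open>Upper bound for the distance\<close>

definition coord_mod :: "int \<Rightarrow> int \<Rightarrow> int \<Rightarrow> int \<Rightarrow> int" where
  "coord_mod n m i x = (if i = 0 \<or> i = m + 1 then x mod n else x)"

definition move :: "int \<Rightarrow> int \<Rightarrow> (int \<Rightarrow> int) \<Rightarrow> int \<Rightarrow> int \<Rightarrow> int \<Rightarrow> int" where
  "move n m v j s = (\<lambda>i. if i = j then coord_mod n m i (v i - s)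
     else if i = j + 1 then coord_mod n m i (v i + s) else v i)"

lemma coord_mod_dvd: "n dvd (coord_mod n m i x - x)"
  unfolding coord_mod_def by (simp add: mod_eq_dvd_iff[symmetric] mod_diff_left_eq[symmetric])

lemma inZ_move:
  assumes Z: "inZ n m v" and "0 < n" "0 \<le> j" "j \<le> m"
    and cj: "1 \<le> j \<Longrightarrow> v j - s \<in> {-1, 0, 1}"
    and cj1: "j + 1 \<le> m \<Longrightarrow> v (j + 1) + s \<in> {-1, 0, 1}"
  shows "inZ n m (move n m v j s)"
proof -
  define w where "w = move n m v j s"
  define t1 where "t1 = coord_mod n m j (v j - s) - (v j - s)"
  define t2 where "t2 = coord_mod n m (j + 1) (v (j + 1) + s) - (v (j + 1) + s)"
  have Zv: "\<forall>i. (i < 0 \<or> i > m + 1) \<longrightarrow> v i = 0" "v 0 \<in> {0..<n}" "v (m + 1) \<in> {0..<n}"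
     "\<forall>i\<in>{1..m}. v i \<in> {-1, 0, 1}" "n dvd (\<Sum>i=0..m+1. v i)"
    using Z unfolding inZ_def by auto
  have w: "w i = v i + (if i = j then t1 - s else 0) + (if i = j + 1 then t2 + s else 0)" for i
    unfolding w_def move_def t1_def t2_def by auto
  have "(\<Sum>i=0..m+1. w i) = (\<Sum>i=0..m+1. v i) + t1 + t2"
    using assms(3,4) unfolding w sum.distrib by (simp add: sum.delta)
  moreover have "n dvd t1" "n dvd t2" unfolding t1_def t2_def by (rule coord_mod_dvd)+
  ultimately have "n dvd (\<Sum>i=0..m+1. w i)" using Zv(5) by simp
  moreover have "\<forall>i\<in>{1..m}. w i \<in> {-1, 0, 1}"
    using Zv(4) cj cj1 unfolding w_def move_def coord_mod_def by auto
  moreover have "\<forall>i. (i < 0 \<or> i > m + 1) \<longrightarrow> w i = 0"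
    using Zv(1) assms(3,4) unfolding w_def move_def by auto
  moreover have "w 0 \<in> {0..<n}" "w (m + 1) \<in> {0..<n}"
    using Zv(2,3) assms(2-4) unfolding w_def move_def coord_mod_def by auto
  ultimately show ?thesis unfolding inZ_def w_def by blast
qed

lemma adjZ_move:
  assumes "inZ n m v" "inZ n m (move n m v j s)" "0 \<le> j" "j \<le> m" "\<bar>s\<bar> = 1"
  shows "adjZ n m v (move n m v j s)"
proof -
  have "coordeq n m j (v j) (move n m v j s j + s)"
    "coordeq n m (j + 1) (v (j + 1)) (move n m v j s (j + 1) - s)"
    unfolding coordeq_def move_def coord_mod_def by (auto simp: mod_add_left_eq mod_diff_left_eq)
  moreover have "s = 1 \<or> s = -1" using assms(5) by auto
  ultimately show ?thesis
    using assms unfolding adjZ_def by (intro conjI bexI[of _ j]) (auto simp: move_def)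
qed

lemma psum_move:
  assumes "0 \<le> j" "j \<le> m"
  obtains t where "n dvd t"
    "\<And>p. 0 \<le> p \<Longrightarrow> p \<le> m \<Longrightarrow> psum (move n m v j s) p = psum v p + t - (if p = j then s else 0)"
proof
  define t where "t = coord_mod n m j (v j - s) - (v j - s)"
  show "n dvd t" unfolding t_def by (rule coord_mod_dvd)
  have u: "\<forall>i\<in>{0..m}. move n m v j s i = v i + (if i = j then - s + t else if i = j + 1 then - (- s) else 0)"
    using assms unfolding move_def coord_mod_def t_def by auto
  have "j \<noteq> 0 \<longrightarrow> t = 0" using assms unfolding t_def coord_mod_def by auto
  then show "psum (move n m v j s) p = psum v p + t - (if p = j then s else 0)"
    if "0 \<le> p" "p \<le> m" for p
    using psum_shift[OF assms that u] by simp
qed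

lemma cost_eq_0_imp_zeroV:
  assumes Z: "inZ n m v" and "0 \<le> m" "n dvd c" "cost m v c \<le> 0"
  shows "v = zeroV"
proof -
  have all: "\<forall>p\<in>{0..m}. psum v p = c"
    using assms(4) cost_nonneg[of m v c] unfolding cost_def by (simp add: sum_nonneg_eq_0_iff)
  have small_dvd: "\<And>x. x \<in> {0..<n} \<Longrightarrow> n dvd x \<Longrightarrow> x = 0"
    using zdvd_imp_le by fastforce
  have "v 0 = c" using all assms(2) psum_0[of v] by auto
  then have c0: "c = 0" using Z assms(3) small_dvd unfolding inZ_def by auto
  have mid: "\<forall>p\<in>{1..m}. v p = 0"
  proof
    fix p assume "p \<in> {1..m}"
    then show "v p = 0" using psum_step[of p v] all by auto
  qed
  have "psum v (m + 1) = v (m + 1)" using psum_step[of "m + 1" v] all assms(2) c0 by auto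
  then have "n dvd v (m + 1)" using Z unfolding inZ_def psum_def by auto
  then have top: "v (m + 1) = 0" using Z small_dvd unfolding inZ_def by auto
  show ?thesis
  proof
    fix i
    show "v i = zeroV i"
      using Z mid top \<open>v 0 = c\<close> c0 unfolding inZ_def zeroV_def
      by (cases "i < 0 \<or> i > m + 1"; cases "i = 0"; cases "i = m + 1"; auto)
  qed
qed

text \<open>The move is made at an extremal prefix sum on a side of \<open>c\<close> where some prefix sum lies;
  the neighbouring coordinates then leave room to shift it one unit towards \<open>c\<close>.\<close>
lemma cost_decreasing_move:
  assumes Z: "inZ n m v" and "0 < n" "0 \<le> m" and pos: "0 < cost m v c"
  obtains w t where "adjZ n m v w" "inZ n m w" "n dvd t" "cost m w (c + t) = cost m v c - 1"
proof -
  obtain p0 where p0: "p0 \<in> {0..m}" "psum v p0 \<noteq> c"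
  proof (rule ccontr)
    assume "\<not> thesis"
    then have "\<forall>p\<in>{0..m}. psum v p = c" using that by blast
    then have "cost m v c = 0" unfolding cost_def by simp
    then show False using pos by simp
  qed
  define s :: int where "s = (if \<exists>p\<in>{0..m}. psum v p > c then 1 else -1)"
  have s: "\<bar>s\<bar> = 1" unfolding s_def by auto
  let ?g = "\<lambda>p. s * psum v p"
  have "Max (?g ` {0..m}) \<in> ?g ` {0..m}" using assms(3) by (intro Max_in) auto
  then obtain j where j: "j \<in> {0..m}" "?g j = Max (?g ` {0..m})" by auto
  have jmax: "\<forall>p\<in>{0..m}. s * psum v p \<le> s * psum v j"
    unfolding j(2) by (auto intro: Max_ge)
  have s_cases: "s = 1 \<or> s = -1" using s by auto
  have sf: "0 < s * (psum v j - c)"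
  proof (cases "\<exists>p\<in>{0..m}. psum v p > c")
    case True
    then obtain p where p: "p \<in> {0..m}" "psum v p > c" by blast
    have "s = 1" using True unfolding s_def by simp
    then show ?thesis using jmax[rule_format, OF p(1)] p(2) by simp
  next
    case False
    then have "psum v p0 < c" "s = -1" using p0 unfolding s_def by force+
    then show ?thesis using jmax[rule_format, OF p0(1)] by simp
  qed
  have vr: "\<forall>i\<in>{1..m}. v i \<in> {-1, 0, 1}" using Z unfolding inZ_def by auto
  have cj: "v j - s \<in> {-1, 0, 1}" if "1 \<le> j"
  proof -
    have "v j \<in> {-1, 0, 1}" using vr j(1) that by auto
    moreover have "v j = psum v j - psum v (j - 1)" using psum_step[of j v] that by simp
    moreover have "s * psum v (j - 1) \<le> s * psum v j" using jmax j that by auto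
    ultimately show ?thesis using s_cases by auto
  qed
  have cj1: "v (j + 1) + s \<in> {-1, 0, 1}" if "j + 1 \<le> m"
  proof -
    have "v (j + 1) \<in> {-1, 0, 1}" using vr j(1) that by auto
    moreover have "v (j + 1) = psum v (j + 1) - psum v j" using psum_step[of "j + 1" v] j(1) by simp
    moreover have "s * psum v (j + 1) \<le> s * psum v j" using jmax j that by auto
    ultimately show ?thesis using s_cases by auto
  qed
  define w where "w = move n m v j s"
  have Zw: "inZ n m w" unfolding w_def using inZ_move[OF Z assms(2) _ _ cj cj1] j by auto
  obtain t where t: "n dvd t" "\<And>p. 0 \<le> p \<Longrightarrow> p \<le> m \<Longrightarrow> psum w p = psum v p + t - (if p = j then s else 0)"
    using psum_move[of j m n v s] j unfolding w_def by auto
  have "cost m w (c + t) = (\<Sum>p=0..m. \<bar>(psum v p - c) + (if p = j then - s else 0)\<bar>)"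
    unfolding cost_def using t(2) by (intro sum.cong) auto
  also have "\<dots> = cost m v c - 1"
    unfolding cost_def using sum_abs_add_delta_eq[OF j(1), of "- s" "\<lambda>p. psum v p - c"] s sf by auto
  finally show thesis
    using that[OF _ Zw t(1)] adjZ_move[OF Z Zw[unfolded w_def]] j s unfolding w_def by auto
qed

lemma relpowp_adjZ_zeroV_le_cost:
  assumes "0 < n" "0 \<le> m"
  shows "inZ n m v \<Longrightarrow> n dvd c \<Longrightarrow> cost m v c \<le> int N \<Longrightarrow> \<exists>k\<le>N. (adjZ n m ^^ k) v zeroV"
proof (induction N arbitrary: v c)
  case 0
  then have "v = zeroV" using cost_eq_0_imp_zeroV[of n m v c] assms by simp
  then show ?case by simp
next
  case (Suc N)
  show ?case
  proof (cases "cost m v c \<le> 0")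
    case True
    then have "v = zeroV" using cost_eq_0_imp_zeroV[of n m v c] Suc.prems assms by simp
    then show ?thesis by (intro exI[of _ 0]) simp
  next
    case False
    then obtain w t where adj: "adjZ n m v w" and Zw: "inZ n m w" and t: "n dvd t"
      and dec: "cost m w (c + t) = cost m v c - 1"
      using cost_decreasing_move[OF Suc.prems(1) assms, of c] by auto
    have "n dvd c + t" using Suc.prems(2) t by simp
    moreover have "cost m w (c + t) \<le> int N" using dec Suc.prems(3) by simp
    ultimately obtain k where "k \<le> N" "(adjZ n m ^^ k) w zeroV" using Suc.IH[OF Zw] by blast
    then show ?thesis using adj by (meson Suc_le_mono relpowp_Suc_I2)
  qed
qed

lemma distZ_le_cost:
  assumes "0 < n" "0 \<le> m" "inZ n m v" "n dvd c"
  shows "distZ n m v zeroV \<le> enat (nat (cost m v c))"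
proof -
  have "cost m v c \<le> int (nat (cost m v c))" by simp
  then obtain k where k: "k \<le> nat (cost m v c)" "(adjZ n m ^^ k) v zeroV"
    using relpowp_adjZ_zeroV_le_cost[OF assms] by blast
  then have "(LEAST k. (adjZ n m ^^ k) v zeroV) \<le> k" by (intro Least_le)
  then show ?thesis unfolding distZ_def using k by auto
qed

subsection \<open>The cost of a vertex with a wide central window\<close>

lemma Piv_iff: "p \<in> Piv n m v \<longleftrightarrow> -1 \<le> p \<and> p \<le> m + 1 \<and> n dvd psum v p"
  unfolding Piv_def psum_def by simp

lemma finite_Piv: "finite (Piv n m v)"
  by (rule finite_subset[of _ "{-1..m+1}"]) (auto simp: Piv_def)

lemma pivots_around_middle:
  assumes "inZ n m v" "0 \<le> m"
  shows "p_l n m v \<in> Piv n m v" "real_of_int (p_l n m v) < real_of_int m / 2"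
    and "p_r n m v \<in> Piv n m v" "real_of_int m / 2 \<le> real_of_int (p_r n m v)"
    and "p_l n m v < j \<Longrightarrow> j < p_r n m v \<Longrightarrow> j \<notin> Piv n m v"
proof -
  let ?L = "{p \<in> Piv n m v. real_of_int p < real_of_int m / 2}"
  let ?R = "{p \<in> Piv n m v. real_of_int p \<ge> real_of_int m / 2}"
  have "-1 \<in> ?L" "m + 1 \<in> ?R" using assms unfolding Piv_def inZ_def by auto
  then have L: "finite ?L" "?L \<noteq> {}" and R: "finite ?R" "?R \<noteq> {}" using finite_Piv by auto
  show "p_l n m v \<in> Piv n m v" "real_of_int (p_l n m v) < real_of_int m / 2"
    using Max_in[OF L] unfolding p_l_def by auto
  show "p_r n m v \<in> Piv n m v" "real_of_int m / 2 \<le> real_of_int (p_r n m v)"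
    using Min_in[OF R] unfolding p_r_def by auto
  show "j \<notin> Piv n m v" if "p_l n m v < j" "j < p_r n m v"
    using that Max_ge[OF L(1), of j] Min_le[OF R(1), of j] unfolding p_l_def p_r_def by force
qed

lemma pivots_far_from_middle:
  assumes "inZ n m v" "0 \<le> m" "hZ n m v \<ge> h_nm n m"
  shows "2 * p_l n m v \<le> m - n" "m + n \<le> 2 * p_r n m v"
proof -
  have far: "real_of_int n / 2 \<le> \<bar>real_of_int p - real_of_int m / 2\<bar>" if "p \<in> Piv n m v" for p
  proof -
    have "hZ n m v \<le> \<bar>real_of_int p - real_of_int m / 2\<bar>"
      unfolding hZ_def using finite_Piv that by (intro Min_le) auto
    moreover have "real_of_int n / 2 \<le> h_nm n m" unfolding h_nm_def by auto
    ultimately show ?thesis using assms(3) by linarith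
  qed
  note piv = pivots_around_middle[OF assms(1,2)]
  have "real_of_int (2 * p_l n m v) \<le> real_of_int (m - n)"
    using far[OF piv(1)] piv(2) by simp
  then show "2 * p_l n m v \<le> m - n" by linarith
  have "real_of_int (m + n) \<le> real_of_int (2 * p_r n m v)"
    using far[OF piv(3)] piv(4) by simp
  then show "m + n \<le> 2 * p_r n m v" by linarith
qed

lemma same_div_if_no_multiple:
  fixes x y n :: int
  assumes "\<bar>x - y\<bar> \<le> 1" "\<not> n dvd x" "\<not> n dvd y" "1 < n"
  shows "x div n = y div n"
proof (rule ccontr)
  assume ne: "x div n \<noteq> y div n"
  have bnd_x: "n * (x div n) \<le> x" "x < n * (x div n) + n" "n * (x div n) \<noteq> x"
    using assms(2,4) pos_mod_bound[of n x] by (auto simp: minus_mod_eq_mult_div[symmetric] mult.commute)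
  have bnd_y: "n * (y div n) \<le> y" "y < n * (y div n) + n" "n * (y div n) \<noteq> y"
    using assms(3,4) pos_mod_bound[of n y] by (auto simp: minus_mod_eq_mult_div[symmetric] mult.commute)
  consider "x div n + 1 \<le> y div n" | "y div n + 1 \<le> x div n" using ne by linarith
  then show False
  proof cases
    case 1
    then have "n * (x div n) + n \<le> n * (y div n)"
      using mult_left_mono[OF 1, of n] assms(4) by (simp add: algebra_simps)
    then show False using bnd_x bnd_y assms(1) by linarith
  next
    case 2
    then have "n * (y div n) + n \<le> n * (x div n)"
      using mult_left_mono[OF 2, of n] assms(4) by (simp add: algebra_simps)
    then show False using bnd_x bnd_y assms(1) by linarith
  qed
qed

lemma div_const_if_unit_steps:
  fixes g :: "int \<Rightarrow> int"
  assumes "1 < n" and steps: "\<And>i. a \<le> i \<Longrightarrow> i < b \<Longrightarrow> \<bar>g (i + 1) - g i\<bar> \<le> 1"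
    and avoid: "\<And>i. a \<le> i \<Longrightarrow> i \<le> b \<Longrightarrow> \<not> n dvd g i" and "a \<le> j" "j \<le> b"
  shows "g j div n = g a div n"
proof -
  have "j \<le> b \<longrightarrow> g j div n = g a div n"
    using \<open>a \<le> j\<close>
  proof (induction j rule: int_ge_induct)
    case (step i)
    show ?case
    proof
      assume "i + 1 \<le> b"
      then have "g (i + 1) div n = g i div n"
        using same_div_if_no_multiple[OF steps avoid avoid assms(1)] step.hyps by auto
      then show "g (i + 1) div n = g a div n" using step \<open>i + 1 \<le> b\<close> by simp
    qed
  qed simp
  then show ?thesis using \<open>j \<le> b\<close> by simp
qed

text \<open>The prefix sums cannot cross a multiple of \<open>n\<close> between the pivots, and they start
  below \<open>psum v a + n\<close> and end above \<open>psum v a\<close>.\<close>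
lemma psum_between_pivots:
  assumes "1 < n" and Z: "inZ n m v" and "-1 \<le> a" "a < j" "j < b" "j \<le> m" "b \<le> m + 1"
    and a: "n dvd psum v a" and b: "psum v b = psum v a + n"
    and gap: "\<And>i. a < i \<Longrightarrow> i < b \<Longrightarrow> \<not> n dvd psum v i"
  shows "psum v a < psum v j \<and> psum v j < psum v a + n"
proof -
  define f where "f = a + 1"
  define l where "l = min (b - 1) m"
  have fl: "0 \<le> f" "f \<le> j" "j \<le> l" unfolding f_def l_def using assms by auto
  have first: "psum v f \<le> psum v a + n - 1"
  proof (cases "a = -1")
    case True
    then show ?thesis using Z psum_0[of v] psum_neg[of a v] unfolding f_def inZ_def by auto
  next
    case False
    then show ?thesis using psum_lipschitz[OF Z, of a f] assms fl unfolding f_def by auto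
  qed
  have last: "psum v a + 1 \<le> psum v l"
  proof (cases "b \<le> m")
    case True
    then show ?thesis using psum_lipschitz[OF Z, of l b] assms fl b unfolding l_def by auto
  next
    case False
    then have "b = m + 1" "l = m" using assms unfolding l_def by auto
    then show ?thesis using psum_step[of "m + 1" v] Z b fl unfolding inZ_def by auto
  qed
  define k where "k = psum v a div n"
  have ak: "psum v a = n * k" using a unfolding k_def by simp
  have steps: "\<bar>psum v (i + 1) - psum v i\<bar> \<le> 1" if "f \<le> i" "i < l" for i
    using psum_lipschitz[OF Z, of i "i + 1"] that fl unfolding l_def by auto
  have avoid: "\<not> n dvd psum v i" if "f \<le> i" "i \<le> l" for i
    using gap that unfolding f_def l_def by auto
  have block: "psum v i div n = psum v f div n" if "f \<le> i" "i \<le> l" for i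
    using div_const_if_unit_steps[OF assms(1), of f l "psum v" i] steps avoid that by blast
  have "psum v f div n \<le> (n * k + (n - 1)) div n"
    using zdiv_mono1[of "psum v f" "n * k + (n - 1)" n] first assms(1) unfolding ak by simp
  also have "\<dots> = k" using assms(1) by simp
  finally have "psum v f div n \<le> k" .
  moreover have "k \<le> psum v l div n"
    using zdiv_mono1[OF last, of n] assms(1) unfolding ak by simp
  ultimately have "psum v j div n = k" using block[of j] block[of l] fl by simp
  then have "n * k \<le> psum v j" "psum v j < n * k + n" "psum v j \<noteq> n * k"
    using assms(1) gap[of j] assms(4,5) pos_mod_bound[of n "psum v j"]
    by (auto simp: minus_mod_eq_mult_div[symmetric] mult.commute)
  then show ?thesis using ak by auto
qed

lemma sum_max_0_left:
  fixes e m :: int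
  assumes "0 \<le> e" "e \<le> m"
  shows "2 * (\<Sum>j=0..m. max 0 (e - j)) = e * (e + 1)"
proof -
  have "(\<Sum>j=0..m. max 0 (e - j)) = (\<Sum>j=0..e. e - j)"
    using assms by (intro sum.mono_neutral_cong_right) auto
  also have "\<dots> = (\<Sum>j=0..e. e) - (\<Sum>j=0..e. j)" by (simp add: sum_subtractf)
  finally show ?thesis using double_gauss_sum_int[of 0 e] assms by (simp add: algebra_simps)
qed

lemma sum_max_0_right:
  fixes e m :: int
  assumes "0 \<le> e" "e \<le> m"
  shows "2 * (\<Sum>j=0..m. max 0 (j - (m - e))) = e * (e + 1)"
proof -
  have "(\<Sum>j=0..m. max 0 (j - (m - e))) = (\<Sum>j=m-e..m. j - (m - e))"
    using assms by (intro sum.mono_neutral_cong_right) auto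
  also have "\<dots> = (\<Sum>j=m-e..m. j) - (\<Sum>j=m-e..m. m - e)" by (simp add: sum_subtractf)
  finally show ?thesis using double_gauss_sum_int[of "m - e" m] assms by (simp add: algebra_simps)
qed

lemma central_window:
  assumes "1 < n" "n \<le> m" and Z: "inZ n m v"
    and "hZ n m v \<ge> h_nm n m" and I: "(\<Sum>i\<in>I_c n m v. v i) = n"
  defines "e \<equiv> (m - n) div 2"
  obtains pl pr where "-1 \<le> pl" "pl \<le> e" "m - e \<le> pr" "pr \<le> m + 1"
    "n dvd psum v pl" "psum v pr = psum v pl + n" "\<And>j. pl < j \<Longrightarrow> j < pr \<Longrightarrow> \<not> n dvd psum v j"
proof -
  define pl where "pl = p_l n m v"
  define pr where "pr = p_r n m v"
  have m0: "0 \<le> m" using assms(1,2) by simp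
  note piv = pivots_around_middle[OF Z m0, folded pl_def pr_def]
  note far = pivots_far_from_middle[OF Z m0 assms(4), folded pl_def pr_def]
  have range: "-1 \<le> pl" "pl \<le> e" "m - e \<le> pr" "pr \<le> m + 1"
    using piv(1,3) far assms(1,2) unfolding Piv_iff e_def by auto
  moreover have "n dvd psum v pl" using piv(1) unfolding Piv_iff by auto
  moreover have "psum v pr = psum v pl + n"
    using psum_split[of pl pr v] range far assms(1) I unfolding I_c_def pl_def pr_def by simp
  moreover have "\<not> n dvd psum v j" if "pl < j" "j < pr" for j
    using piv(5)[OF that] that range unfolding Piv_iff by auto
  ultimately show thesis by (rule that)
qed

lemma cost_bound_central:
  assumes "1 < n" "n \<le> m" and Z: "inZ n m v"
    and "hZ n m v \<ge> h_nm n m" and I: "(\<Sum>i\<in>I_c n m v. v i) = n"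
  defines "e \<equiv> (m - n) div 2"
  obtains c where "n dvd c" "2 * cost m v c \<le> (m + 1) * n + 2 * e * (e + 1)"
proof -
  obtain pl pr where range: "-1 \<le> pl" "pl \<le> e" "m - e \<le> pr" "pr \<le> m + 1"
    and a_dvd: "n dvd psum v pl" and b: "psum v pr = psum v pl + n"
    and gap: "\<And>j. pl < j \<Longrightarrow> j < pr \<Longrightarrow> \<not> n dvd psum v j"
    using central_window[OF assms(1-5)] unfolding e_def by blast
  define a where "a = psum v pl"
  have e: "0 \<le> e" "2 * e \<le> m - n" using assms(2) unfolding e_def by auto
  have per_index: "\<bar>psum v j - a\<bar> + \<bar>psum v j - (a + n)\<bar> \<le> n + 2 * max 0 (e - j) + 2 * max 0 (j - (m - e))"
    if j: "j \<in> {0..m}" for j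
  proof -
    consider "j \<le> pl" | "pr \<le> j" | "pl < j" "j < pr" by linarith
    then show ?thesis
    proof cases
      case 1
      then have "\<bar>psum v pl - psum v j\<bar> \<le> pl - j" using psum_lipschitz[OF Z, of j pl] j range e assms(1) by auto
      then show ?thesis unfolding a_def using range(2) assms(1) by (smt (verit))
    next
      case 2
      then have "\<bar>psum v j - psum v pr\<bar> \<le> j - pr" using psum_lipschitz[OF Z, of pr j] j range e assms(1,2) by auto
      then show ?thesis using b range(3) assms(1) unfolding a_def by (smt (verit))
    next
      case 3
      have "a < psum v j \<and> psum v j < a + n"
        using psum_between_pivots[OF assms(1) Z range(1) 3 _ range(4) a_dvd b gap] j unfolding a_def by auto
      then show ?thesis by auto
    qed
  qed
  have "cost m v a + cost m v (a + n) = (\<Sum>j=0..m. \<bar>psum v j - a\<bar> + \<bar>psum v j - (a + n)\<bar>)"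
    unfolding cost_def by (simp add: sum.distrib)
  also have "\<dots> \<le> (\<Sum>j=0..m. n + 2 * max 0 (e - j) + 2 * max 0 (j - (m - e)))"
    using per_index by (intro sum_mono) auto
  also have "\<dots> = (m + 1) * n + 2 * (\<Sum>j=0..m. max 0 (e - j)) + 2 * (\<Sum>j=0..m. max 0 (j - (m - e)))"
    using assms(1,2) by (simp add: sum.distrib sum_distrib_left[symmetric])
  also have "\<dots> = (m + 1) * n + 2 * e * (e + 1)"
    using sum_max_0_left[of e m] sum_max_0_right[of e m] e assms(1,2) by (simp add: algebra_simps)
  finally have "cost m v a + cost m v (a + n) \<le> (m + 1) * n + 2 * e * (e + 1)" .
  then show thesis
    using that[of a] that[of "a + n"] a_dvd[folded a_def] by (cases "cost m v a \<le> cost m v (a + n)") auto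
qed

subsection \<open>The cost of the extremal vertices\<close>

lemma sum_signed_le_sum_abs:
  fixes f :: "int \<Rightarrow> int"
  shows "(\<Sum>j=0..m. if j \<le> x then c - f j else f j - c) \<le> (\<Sum>j=0..m. \<bar>f j - c\<bar>)"
  by (intro sum_mono) auto

lemma double_sum_signed_linear:
  fixes x m d :: int
  assumes "-1 \<le> x" "x \<le> m"
  shows "2 * (\<Sum>j=0..m. if j \<le> x then d - j else j - d)
    = 2 * (x + 1) * d - x * (x + 1) + (m - x) * (x + 1 + m) - 2 * (m - x) * d"
proof -
  have un: "{0..m} = {0..x} \<union> {x+1..m}" "{0..x} \<inter> {x+1..m} = {}" using assms by auto
  have "(\<Sum>j=0..m. if j \<le> x then d - j else j - d) = (\<Sum>j=0..x. d - j) + (\<Sum>j=x+1..m. j - d)"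
    unfolding un(1) sum.union_disjoint[OF _ _ un(2), simplified] by (intro arg_cong2[where f = "(+)"] sum.cong) auto
  also have "\<dots> = ((x + 1) * d - (\<Sum>j=0..x. j)) + ((\<Sum>j=x+1..m. j) - (m - x) * d)"
    using assms by (simp add: sum_subtractf)
  finally show ?thesis
    using double_gauss_sum_int[of 0 x] double_gauss_sum_int[of "x + 1" m] assms by (simp add: algebra_simps)
qed

lemma sum_signed_step_before:
  fixes x m k :: int
  assumes "x < k" "0 \<le> k" "k \<le> m + 1"
  shows "(\<Sum>j=0..m. if j \<le> x then (if k \<le> j then 1 else 0) else (if k \<le> j then -1 else 0)) = - (m - k + 1)"
proof -
  have "(\<Sum>j=0..m. if j \<le> x then (if k \<le> j then 1 else 0) else (if k \<le> j then -1 else 0)) = (\<Sum>j=k..m. (-1::int))"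
    using assms by (intro sum.mono_neutral_cong_right) auto
  then show ?thesis using assms by simp
qed

lemma sum_signed_step_after:
  fixes x m k :: int
  assumes "k - 1 \<le> x" "x \<le> m" "0 \<le> k"
  shows "(\<Sum>j=0..m. if j \<le> x then (if k \<le> j then 1 else 0) else (if k \<le> j then -1 else 0)) = (x - k + 1) - (m - x)"
proof -
  have un: "{0..m} = {0..x} \<union> {x+1..m}" "{0..x} \<inter> {x+1..m} = {}" using assms by auto
  have "(\<Sum>j=0..m. if j \<le> x then (if k \<le> j then 1 else 0) else (if k \<le> j then -1 else 0))
      = (\<Sum>j=0..x. if k \<le> j then 1 else 0) + (\<Sum>j=x+1..m. (-1::int))"
    unfolding un(1) sum.union_disjoint[OF _ _ un(2), simplified] using assms
    by (intro arg_cong2[where f = "(+)"] sum.cong) auto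
  also have "(\<Sum>j=0..x. if k \<le> j then 1 else (0::int)) = (\<Sum>j=k..x. 1)"
    using assms by (intro sum.mono_neutral_cong_right) auto
  finally show ?thesis using assms by simp
qed

lemma ceiling_half_succ: "\<lceil>real_of_int (m + 1) / 2\<rceil> = (m + 2) div 2"
proof (rule ceiling_unique)
  have "2 * ((m + 2) div 2) = m + 2 \<or> 2 * ((m + 2) div 2) = m + 1" by presburger
  then have "real_of_int (2 * ((m + 2) div 2)) = real_of_int (m + 2)
      \<or> real_of_int (2 * ((m + 2) div 2)) = real_of_int (m + 1)"
    by auto
  then show "real_of_int ((m + 2) div 2) - 1 < real_of_int (m + 1) / 2"
    "real_of_int (m + 1) / 2 \<le> real_of_int ((m + 2) div 2)" by auto
qed

lemma psum_u0Z:
  assumes "0 \<le> p" "p \<le> m"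
  shows "psum (u0Z n m) p = (- ((m - n) div 2)) mod n + p"
proof -
  have "psum (u0Z n m) p = psum (u0Z n m) 0 + (\<Sum>i=1..p. u0Z n m i)" using psum_split[of 0 p] assms by simp
  also have "(\<Sum>i=1..p. u0Z n m i) = (\<Sum>i=1..p. 1)" using assms by (intro sum.cong) (auto simp: u0Z_def Let_def)
  finally show ?thesis using assms by (simp add: psum_0 u0Z_def Let_def)
qed

lemma psum_u1Z:
  assumes "2 \<le> m" "0 \<le> p" "p \<le> m"
  shows "psum (u1Z n m) p = (- ((m - n) div 2)) mod n + p - (if (m + 2) div 2 \<le> p then 1 else 0)"
proof -
  define k where "k = (m + 2) div 2"
  have k: "2 \<le> k" "k \<le> m" using assms unfolding k_def by auto
  have u: "u1Z n m i = (if i = k then 0 else if 1 \<le> i \<and> i \<le> m then 1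
      else if i = 0 then (- ((m - n) div 2)) mod n else u1Z n m i)" for i
    unfolding u1Z_def ceiling_half_succ k_def Let_def by simp
  have "psum (u1Z n m) p = psum (u1Z n m) 0 + (\<Sum>i=1..p. u1Z n m i)" using psum_split[of 0 p] assms by simp
  also have "(\<Sum>i=1..p. u1Z n m i) = (\<Sum>i=1..p. 1 - (if i = k then 1 else 0))"
    using assms by (subst u) (intro sum.cong; auto)
  also have "\<dots> = p - (if k \<in> {1..p} then 1 else 0)" using assms by (simp add: sum_subtractf sum.delta)
  finally show ?thesis using k u[of 0] unfolding k_def[symmetric] by (auto simp: psum_0)
qed

lemma mod_eq_add_mult: "\<exists>r. x mod n = x + n * (r::int)"
  by (metis minus_div_mult_eq_mod mult.commute diff_conv_add_uminus mult_minus_right)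

text \<open>For a multiple \<open>c\<close> of \<open>n\<close>, the prefix sums of \<open>u\<^sup>0\<close> and \<open>u\<^sup>1\<close> are offset
  from \<open>c\<close> by \<open>d = e + n q\<close>. The linear lower bound of the cost is taken with break point
  \<open>x = e\<close> if \<open>q \<le> 0\<close> and \<open>x = e + n - 1\<close> (resp. \<open>e + n\<close>) if \<open>q \<ge> 1\<close>; the next four
  inequalities compare it with the bound for the vertices with a wide central window.\<close>
lemma even_bound_le_left:
  fixes e n q :: int
  assumes "1 < n" "0 \<le> e" "q \<le> 0"
  defines "m \<equiv> 2 * e + n" and "d \<equiv> e + n * q"
  shows "(m + 1) * n + 2 * e * (e + 1) \<le> 2 * (e + 1) * d - e * (e + 1) + (m - e) * (e + 1 + m) - 2 * (m - e) * d + 1"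
proof -
  have "0 \<le> (- q) * (n * (n - 1))" using assms by (intro mult_nonneg_nonneg) auto
  then show ?thesis unfolding m_def d_def by (simp add: algebra_simps)
qed

lemma even_bound_le_right:
  fixes e n q :: int
  assumes "1 < n" "0 \<le> e" "1 \<le> q"
  defines "m \<equiv> 2 * e + n" and "d \<equiv> e + n * q" and "x \<equiv> e + n - 1"
  shows "(m + 1) * n + 2 * e * (e + 1) \<le> 2 * (x + 1) * d - x * (x + 1) + (m - x) * (x + 1 + m) - 2 * (m - x) * d + 1"
proof -
  have "0 \<le> (q - 1) * (n * (n - 1))" using assms by (intro mult_nonneg_nonneg) auto
  then show ?thesis unfolding m_def d_def x_def by (simp add: algebra_simps)
qed

lemma odd_bound_le_left:
  fixes e n q k :: int
  assumes "1 < n" "0 \<le> e" "q \<le> 0" "m = 2 * e + n + 1" "m + 1 \<le> 2 * k" "2 * k \<le> m + 2"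
  defines "d \<equiv> e + n * q"
  shows "(m + 1) * n + 2 * e * (e + 1)
    \<le> 2 * (e + 1) * d - e * (e + 1) + (m - e) * (e + 1 + m) - 2 * (m - e) * d - 2 * (m - k + 1) + 1"
proof -
  have "0 \<le> (- q) * (n * n)" using assms by (intro mult_nonneg_nonneg) auto
  then show ?thesis using assms unfolding d_def by (simp add: algebra_simps)
qed

lemma odd_bound_le_right:
  fixes e n q k :: int
  assumes "1 < n" "0 \<le> e" "1 \<le> q" "m = 2 * e + n + 1" "m + 1 \<le> 2 * k" "2 * k \<le> m + 2"
  defines "d \<equiv> e + n * q" and "x \<equiv> e + n"
  shows "(m + 1) * n + 2 * e * (e + 1)
    \<le> 2 * (x + 1) * d - x * (x + 1) + (m - x) * (x + 1 + m) - 2 * (m - x) * d + 2 * ((x - k + 1) - (m - x)) + 1"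
proof -
  have h: "n * (n * 2) \<le> n * (n * (q * 2))" using assms by (intro mult_left_mono) auto
  show ?thesis using assms unfolding d_def x_def by (simp add: algebra_simps) (use h in linarith)
qed

lemma cost_u0Z_ge:
  assumes "1 < n" "n \<le> m" "even (m - n)" "n dvd c"
  defines "e \<equiv> (m - n) div 2"
  shows "(m + 1) * n + 2 * e * (e + 1) \<le> 2 * cost m (u0Z n m) c + 1"
proof -
  have me: "m = 2 * e + n" "0 \<le> e" using assms(2,3) unfolding e_def by auto
  define c0 where "c0 = (- e) mod n"
  obtain r where r: "c0 = - e + n * r" using mod_eq_add_mult[of "- e" n] unfolding c0_def by blast
  obtain a where a: "c = n * a" using assms(4) by blast
  define d where "d = c - c0"
  have dq: "d = e + n * (a - r)" unfolding d_def using r a by (simp add: algebra_simps)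
  have F: "cost m (u0Z n m) c = (\<Sum>j=0..m. \<bar>(c0 + j) - c\<bar>)"
    unfolding cost_def c0_def e_def using psum_u0Z[of _ m n] by (intro sum.cong) auto
  have low: "2 * (x + 1) * d - x * (x + 1) + (m - x) * (x + 1 + m) - 2 * (m - x) * d \<le> 2 * cost m (u0Z n m) c"
    if "-1 \<le> x" "x \<le> m" for x
  proof -
    have "(\<Sum>j=0..m. if j \<le> x then d - j else j - d) = (\<Sum>j=0..m. if j \<le> x then c - (c0 + j) else (c0 + j) - c)"
      unfolding d_def by (intro sum.cong) auto
    also have "\<dots> \<le> cost m (u0Z n m) c"
      unfolding F by (rule sum_signed_le_sum_abs)
    finally show ?thesis using double_sum_signed_linear[OF that, of d] by simp
  qed
  show ?thesis
  proof (cases "a - r \<le> 0")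
    case True
    then show ?thesis using even_bound_le_left[of n e "a - r"] low[of e] assms(1) me unfolding dq by simp
  next
    case False
    then show ?thesis
      using even_bound_le_right[of n e "a - r"] low[of "e + n - 1"] assms(1) me unfolding dq by simp
  qed
qed

lemma cost_u1Z_ge:
  assumes "1 < n" "n \<le> m" "odd (m - n)" "n dvd c"
  defines "e \<equiv> (m - n) div 2"
  shows "(m + 1) * n + 2 * e * (e + 1) \<le> 2 * cost m (u1Z n m) c + 1"
proof -
  have me: "m = 2 * e + n + 1" "0 \<le> e" using assms(2,3) unfolding e_def by presburger+
  define k where "k = (m + 2) div 2"
  have k: "m + 1 \<le> 2 * k" "2 * k \<le> m + 2" unfolding k_def by auto
  define c0 where "c0 = (- e) mod n"
  obtain r where r: "c0 = - e + n * r" using mod_eq_add_mult[of "- e" n] unfolding c0_def by blast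
  obtain a where a: "c = n * a" using assms(4) by blast
  define d where "d = c - c0"
  have dq: "d = e + n * (a - r)" unfolding d_def using r a by (simp add: algebra_simps)
  have F: "cost m (u1Z n m) c = (\<Sum>j=0..m. \<bar>(c0 + j - (if k \<le> j then 1 else 0)) - c\<bar>)"
    unfolding cost_def c0_def e_def k_def using psum_u1Z[of m _ n] me assms(1) by (intro sum.cong) auto
  let ?step = "\<lambda>x. (\<Sum>j=0..m. if j \<le> x then (if k \<le> j then 1 else 0) else (if k \<le> j then -1 else (0::int)))"
  have low: "2 * (x + 1) * d - x * (x + 1) + (m - x) * (x + 1 + m) - 2 * (m - x) * d + 2 * ?step x
      \<le> 2 * cost m (u1Z n m) c" if "-1 \<le> x" "x \<le> m" for x
  proof -
    let ?f = "\<lambda>j. c0 + j - (if k \<le> j then 1 else 0)"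
    have "(\<Sum>j=0..m. if j \<le> x then d - j else j - d) + ?step x
        = (\<Sum>j=0..m. if j \<le> x then c - ?f j else ?f j - c)"
      unfolding d_def sum.distrib[symmetric] by (intro sum.cong) auto
    also have "\<dots> \<le> cost m (u1Z n m) c"
      unfolding F by (rule sum_signed_le_sum_abs)
    finally show ?thesis using double_sum_signed_linear[OF that, of d] by simp
  qed
  show ?thesis
  proof (cases "a - r \<le> 0")
    case True
    then show ?thesis
      using odd_bound_le_left[of n e "a - r" m k] low[of e] sum_signed_step_before[of e k m]
        assms(1) me k unfolding dq by simp
  next
    case False
    then show ?thesis
      using odd_bound_le_right[of n e "a - r" m k] low[of "e + n"] sum_signed_step_after[of k "e + n" m]
        assms(1) me k unfolding dq by simp
  qed
qed

theorem lemma5p27: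
  fixes n m :: int and v :: "int \<Rightarrow> int"
  assumes "1 < n" and "n \<le> m"
    and "inZ n m v"
    and "hZ n m v \<ge> h_nm n m"
    and "(\<Sum>i\<in>I_c n m v. v i) = n"
  shows "distZ n m v zeroV \<le> D_nm n m"
proof -
  define e where "e = (m - n) div 2"
  define u where "u = (if even (m - n) then u0Z n m else u1Z n m)"
  obtain c where c: "n dvd c" "2 * cost m v c \<le> (m + 1) * n + 2 * e * (e + 1)"
    using cost_bound_central[OF assms] unfolding e_def by blast
  have "enat (nat (cost m v c)) \<le> distZ n m u zeroV"
  proof (rule distZ_ge)
    fix c' assume "n dvd c'"
    then have "(m + 1) * n + 2 * e * (e + 1) \<le> 2 * cost m u c' + 1"
      using cost_u0Z_ge cost_u1Z_ge assms(1,2) unfolding u_def e_def by auto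
    then show "int (nat (cost m v c)) \<le> cost m u c'" using c(2) cost_nonneg[of m v c] by linarith
  qed
  moreover have "distZ n m v zeroV \<le> enat (nat (cost m v c))"
    using distZ_le_cost[of n m v c] assms(1-3) c(1) by simp
  moreover have "distZ n m u zeroV \<le> D_nm n m" unfolding D_nm_def u_def by auto
  ultimately show ?thesis by (meson order_trans)
qed

end
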